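(* Let $p$ be a prime, $G$ an abelian $p$-group having a direct summand of the form $X = Y \oplus Z$, and $n$ a positive integer. Suppose either (a) $Y \cong \mathbb{Z}_{p^n}$ and $Z$ is the direct sum of infinitely many copies of $\mathbb{Z}_{p^m}$, where either $n+2 \le m < \omega$ or $m = \infty$; or (b) $Y$ is the direct sum of infinitely many copies of $\mathbb{Z}_{p^n}$ and $Z \cong \mathbb{Z}_{p^\infty}$. Then $G$ is not semi-generalized Bassian.
   Context: All groups are additively written abelian groups; $\mathbb{Z}_{p^k}$ is the cyclic group of order $p^k$ and $\mathbb{Z}_{p^\infty}$ is the quasicyclic (Prüfer) $p$-group. A subgroup $H$ of a group $A$ is essential in $A$ if $H \cap S \neq \{0\}$ for every non-zero subgroup $S$ of $A$. A group $G$ is semi-generalized Bassian if, for every subgroup $H \le G$, the existence of an injective homomorphism $G \to G/H$ implies that $H$ is an essential subgroup of some direct summand of $G$. *)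

theory Defs
  imports "HOL-Algebra.Algebra"
begin

text \<open>Abelian groups are HOL-Algebra commutative groups (written multiplicatively).\<close>

definition p_group :: "nat \<Rightarrow> ('a, 'b) monoid_scheme \<Rightarrow> bool" where
  "p_group p G \<longleftrightarrow> (\<forall>x \<in> carrier G. \<exists>k::nat. x [^]\<^bsub>G\<^esub> (p ^ k) = \<one>\<^bsub>G\<^esub>)"

definition quasicyclic_group :: "nat \<Rightarrow> rat monoid" where
  "quasicyclic_group p =
     \<lparr> carrier = {x. 0 \<le> x \<and> x < 1 \<and> (\<exists>(a::int) (k::nat). x = of_int a / of_nat (p ^ k))},
       monoid.mult = (\<lambda>x y. frac (x + y)),
       one = 0 \<rparr>"

definition internal_direct_sum :: "('a, 'b) monoid_scheme \<Rightarrow> 'a set \<Rightarrow> 'a set \<Rightarrow> 'a set \<Rightarrow> bool" where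
  "internal_direct_sum G A B S \<longleftrightarrow>
     subgroup A G \<and> subgroup B G \<and> A \<inter> B = {\<one>\<^bsub>G\<^esub>} \<and> A <#>\<^bsub>G\<^esub> B = S"

definition direct_summand :: "('a, 'b) monoid_scheme \<Rightarrow> 'a set \<Rightarrow> bool" where
  "direct_summand G A \<longleftrightarrow> (\<exists>B. internal_direct_sum G A B (carrier G))"

definition essential_in :: "('a, 'b) monoid_scheme \<Rightarrow> 'a set \<Rightarrow> 'a set \<Rightarrow> bool" where
  "essential_in G H A \<longleftrightarrow> subgroup H G \<and> subgroup A G \<and> H \<subseteq> A \<and>
     (\<forall>S. subgroup S G \<and> S \<subseteq> A \<and> S \<noteq> {\<one>\<^bsub>G\<^esub>} \<longrightarrow> H \<inter> S \<noteq> {\<one>\<^bsub>G\<^esub>})"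

definition semi_generalized_bassian :: "('a, 'b) monoid_scheme \<Rightarrow> bool" where
  "semi_generalized_bassian G \<longleftrightarrow>
     (\<forall>H. subgroup H G \<longrightarrow>
        (\<exists>f. f \<in> hom G (G Mod H) \<and> inj_on f (carrier G)) \<longrightarrow>
        (\<exists>S. direct_summand G S \<and> essential_in G H S))"

end

theory Submission
  imports Defs "HOL-Computational_Algebra.Primes" "HOL-Library.Equipollence"
begin

text \<open>
  Write the group additively, let \<open>G = Y \<oplus> Z \<oplus> W\<close> and pick \<open>y\<^sub>0 \<in> Y\<close> of order \<open>p\<^sup>n\<close> and
  \<open>z\<^sub>0 \<in> Z\<close> of order at least \<open>p\<^sup>n\<^sup>+\<^sup>2\<close>. The cyclic subgroup \<open>H\<close> generated by \<open>h = y\<^sub>0 + p z\<^sub>0\<close> is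
  not essential in any direct summand: if \<open>G = S \<oplus> T\<close> with \<open>H \<subseteq> S\<close>, one builds from the
  \<open>S\<close>-component of \<open>z\<^sub>0\<close> an element of order \<open>p\<close> in \<open>S\<close> whose membership in \<open>H\<close> would make
  \<open>p\<^sup>n\<^sup>-\<^sup>1 h\<close> divisible by \<open>p\<^sup>n\<close>, which it is not.

  On the other hand \<open>G\<close> embeds into \<open>G/H\<close>. It suffices to find maps \<open>\<alpha>\<close> on \<open>Y\<close> and \<open>\<gamma>\<close> on
  \<open>Z \<oplus> W\<close> that are additive modulo \<open>H\<close> and such that \<open>\<alpha> y = k y\<^sub>0\<close>, \<open>\<gamma> c = k p z\<^sub>0\<close> force
  \<open>y = c = 0\<close>; \<open>\<gamma>\<close> is the identity on \<open>W\<close>. In case (a) take \<open>\<alpha> = id\<close> and let \<open>\<gamma>\<close> shift the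
  infinitely many copies in \<open>Z\<close>, so that its image avoids \<open>\<langle>z\<^sub>0\<rangle>\<close>. In case (b) shift the copies
  in \<open>Y\<close> instead, and on the Pruefer group \<open>Z\<close> divide by \<open>p\<close>: this is additive up to the socle
  \<open>\<langle>p\<^sup>n\<^sup>+\<^sup>1 z\<^sub>0\<rangle> = \<langle>p\<^sup>n h\<rangle>\<close>.
\<close>

section \<open>Internal direct sums\<close>

lemma internal_direct_sumD:
  assumes "internal_direct_sum G A B C"
  shows "subgroup A G" "subgroup B G" "A \<inter> B = {\<one>\<^bsub>G\<^esub>}" "A <#>\<^bsub>G\<^esub> B = C"
  using assms unfolding internal_direct_sum_def by auto

lemma internal_direct_sum_subset:
  assumes "internal_direct_sum G A B C"
  shows "A \<subseteq> carrier G" "B \<subseteq> carrier G"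
  using internal_direct_sumD[OF assms] subgroup.subset by blast+

lemma internal_direct_sum_mult_mem:
  assumes "internal_direct_sum G A B C" "a \<in> A" "b \<in> B"
  shows "a \<otimes>\<^bsub>G\<^esub> b \<in> C"
  using assms unfolding internal_direct_sum_def set_mult_def by auto

lemma internal_direct_sum_decomp:
  assumes "internal_direct_sum G A B C" "x \<in> C"
  obtains a b where "a \<in> A" "b \<in> B" "x = a \<otimes>\<^bsub>G\<^esub> b"
  using assms unfolding internal_direct_sum_def set_mult_def by auto

context group
begin

lemma internal_direct_sum_left_subset:
  assumes "internal_direct_sum G A B C"
  shows "A \<subseteq> C"
  using internal_direct_sum_mult_mem[OF assms _ subgroup.one_closed[OF internal_direct_sumD(2)[OF assms]]]
    internal_direct_sum_subset[OF assms] by force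

lemma internal_direct_sum_right_subset:
  assumes "internal_direct_sum G A B C"
  shows "B \<subseteq> C"
  using internal_direct_sum_mult_mem[OF assms subgroup.one_closed[OF internal_direct_sumD(1)[OF assms]]]
    internal_direct_sum_subset[OF assms] by force

end

context comm_group
begin

lemma internal_direct_sum_unique:
  assumes ds: "internal_direct_sum G A B C"
    and "a \<in> A" "a' \<in> A" "b \<in> B" "b' \<in> B" and eq: "a \<otimes> b = a' \<otimes> b'"
  shows "a = a'" "b = b'"
proof -
  note sub = internal_direct_sumD[OF ds]
  have carr: "a \<in> carrier G" "a' \<in> carrier G" "b \<in> carrier G" "b' \<in> carrier G"
    using internal_direct_sum_subset[OF ds] assms by blast+
  have "a \<otimes> inv a' \<otimes> b = inv a' \<otimes> (a' \<otimes> b')"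
    using carr by (simp add: m_ac flip: eq)
  also have "\<dots> = b'"
    using carr by (simp flip: m_assoc)
  finally have "a \<otimes> inv a' = b' \<otimes> inv b"
    using carr by (simp add: inv_solve_right)
  moreover have "a \<otimes> inv a' \<in> A" "b' \<otimes> inv b \<in> B"
    using sub(1,2) assms(2-5) by (simp_all add: subgroup.m_inv_closed subgroup.m_closed)
  ultimately have "a \<otimes> inv a' \<in> A \<inter> B"
    by simp
  then have "a \<otimes> inv a' = \<one>"
    using sub(3) by simp
  then show "a = a'"
    using carr by (simp add: inv_solve_right')
  then show "b = b'"
    using eq carr by simp
qed

lemma internal_direct_sum_component_trivial:
  assumes ds: "internal_direct_sum G S T (carrier G)"
    and "s \<in> S" "t \<in> T" "s \<otimes> t \<in> S"
  shows "t = \<one>"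
proof -
  have "s \<otimes> t = (s \<otimes> t) \<otimes> \<one>"
    using internal_direct_sum_subset[OF ds] assms by auto
  then show ?thesis
    using internal_direct_sum_unique(2)[OF ds] assms
      subgroup.one_closed[OF internal_direct_sumD(2)[OF ds]] by metis
qed

lemma internal_direct_sum_assoc:
  assumes DW: "internal_direct_sum G D W (carrier G)" and YZ: "internal_direct_sum G Y Z D"
  shows "internal_direct_sum G Y (Z <#> W) (carrier G)" "internal_direct_sum G Z W (Z <#> W)"
proof -
  note dw = internal_direct_sumD[OF DW] and yz = internal_direct_sumD[OF YZ]
  have sub: "Y \<subseteq> carrier G" "Z \<subseteq> carrier G" "W \<subseteq> carrier G"
    using internal_direct_sum_subset DW YZ by blast+
  have "Y \<subseteq> D" "Z \<subseteq> D"
    using internal_direct_sum_left_subset[OF YZ] internal_direct_sum_right_subset[OF YZ] .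
  then have "Z \<inter> W = {\<one>}"
    using dw(3) yz(2) subgroup.one_closed by blast
  then show "internal_direct_sum G Z W (Z <#> W)"
    unfolding internal_direct_sum_def using yz dw by simp
  have sg: "subgroup (Z <#> W) G"
    using mult_subgroups yz dw by blast
  have "Y \<inter> (Z <#> W) \<subseteq> {\<one>}"
  proof
    fix y assume "y \<in> Y \<inter> (Z <#> W)"
    then obtain z w where y: "y \<in> Y" "z \<in> Z" "w \<in> W" "y = z \<otimes> w"
      unfolding set_mult_def by auto
    have "y \<otimes> \<one> = z \<otimes> w"
      using y sub by auto
    then have "y = z"
      using internal_direct_sum_unique(1)[OF DW] y \<open>Y \<subseteq> D\<close> \<open>Z \<subseteq> D\<close> dw(2) subgroup.one_closed
      by blast
    then show "y \<in> {\<one>}"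
      using y yz(3) by auto
  qed
  then have "Y \<inter> (Z <#> W) = {\<one>}"
    using yz(1) sg subgroup.one_closed by blast
  moreover have "Y <#> (Z <#> W) = carrier G"
    using set_mult_assoc[OF sub, symmetric] yz(4) dw(4) by (simp only:)
  ultimately show "internal_direct_sum G Y (Z <#> W) (carrier G)"
    using yz(1) sg by (simp add: internal_direct_sum_def)
qed

lemma internal_direct_sum_glue:
  assumes ds: "internal_direct_sum G A B C"
  obtains f where "\<And>a b. a \<in> A \<Longrightarrow> b \<in> B \<Longrightarrow> f (a \<otimes> b) = \<alpha> a \<otimes> \<beta> b"
proof -
  define comp where "comp c = (SOME (a, b). a \<in> A \<and> b \<in> B \<and> c = a \<otimes> b)" for c
  have "comp (a \<otimes> b) = (a, b)" if ab: "a \<in> A" "b \<in> B" for a b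
  proof -
    have "\<exists>ab'. case ab' of (a', b') \<Rightarrow> a' \<in> A \<and> b' \<in> B \<and> a \<otimes> b = a' \<otimes> b'"
      using ab by blast
    then have "case comp (a \<otimes> b) of (a', b') \<Rightarrow> a' \<in> A \<and> b' \<in> B \<and> a \<otimes> b = a' \<otimes> b'"
      unfolding comp_def by (rule someI_ex)
    then show ?thesis
      using internal_direct_sum_unique[OF ds ab(1) _ ab(2)] by (auto split: prod.splits)
  qed
  then show thesis
    using that[of "\<lambda>c. case comp c of (a, b) \<Rightarrow> \<alpha> a \<otimes> \<beta> b"] by simp
qed

end

section \<open>Endomorphisms modulo a subgroup\<close>

definition hom_modulo :: "('a, 'b) monoid_scheme \<Rightarrow> 'a set \<Rightarrow> 'a set \<Rightarrow> ('a \<Rightarrow> 'a) \<Rightarrow> bool" where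
  "hom_modulo G H A f \<longleftrightarrow>
     f \<in> A \<rightarrow> A \<and> (\<forall>a\<in>A. \<forall>b\<in>A. f (a \<otimes>\<^bsub>G\<^esub> b) \<in> H #>\<^bsub>G\<^esub> (f a \<otimes>\<^bsub>G\<^esub> f b))"

lemma hom_modulo_iff:
  "hom_modulo G H A f \<longleftrightarrow>
     f \<in> A \<rightarrow> A \<and> (\<forall>a\<in>A. \<forall>b\<in>A. \<exists>h\<in>H. f (a \<otimes>\<^bsub>G\<^esub> b) = h \<otimes>\<^bsub>G\<^esub> (f a \<otimes>\<^bsub>G\<^esub> f b))"
  unfolding hom_modulo_def r_coset_def by blast

context group
begin

lemma hom_modulo_hom:
  assumes "subgroup H G" "f \<in> hom (G\<lparr>carrier := A\<rparr>) (G\<lparr>carrier := A\<rparr>)" "A \<subseteq> carrier G"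
  shows "hom_modulo G H A f"
proof -
  have "f \<in> A \<rightarrow> A" "\<And>a b. a \<in> A \<Longrightarrow> b \<in> A \<Longrightarrow> f (a \<otimes> b) = \<one> \<otimes> (f a \<otimes> f b)"
    using assms(2,3) unfolding hom_def by (auto simp: Pi_iff subset_iff)
  then show ?thesis
    unfolding hom_modulo_iff using subgroup.one_closed[OF assms(1)] by blast
qed

lemma hom_modulo_id:
  assumes "subgroup H G" "A \<subseteq> carrier G"
  shows "hom_modulo G H A (\<lambda>a. a)"
  using hom_modulo_hom[OF assms(1) iso_imp_homomorphism[OF iso_set_refl] assms(2)] .

lemma hom_modulo_coset_hom:
  assumes H: "H \<lhd> G" and f: "hom_modulo G H (carrier G) f"
  shows "(\<lambda>g. H #> f g) \<in> hom G (G Mod H)"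
proof (rule homI)
  interpret normal H G
    using H .
  fix x y assume xy: "x \<in> carrier G" "y \<in> carrier G"
  have f_carr: "f x \<in> carrier G" "f y \<in> carrier G"
    using f xy unfolding hom_modulo_def by auto
  show "H #> f x \<in> carrier (G Mod H)"
    using rcosetsI[OF subset f_carr(1)] by (simp add: FactGroup_def)
  have "f (x \<otimes> y) \<in> H #> (f x \<otimes> f y)"
    using f xy unfolding hom_modulo_def by blast
  then have "H #> f (x \<otimes> y) = H #> (f x \<otimes> f y)"
    using f_carr repr_independence[OF _ _ subgroup_axioms] by simp
  then show "H #> f (x \<otimes> y) = (H #> f x) \<otimes>\<^bsub>G Mod H\<^esub> (H #> f y)"
    using f_carr by (simp add: FactGroup_def rcos_sum)
qed

lemma hom_modulo_coset_inj:
  assumes H: "subgroup H G" and f: "hom_modulo G H (carrier G) f"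
    and ker: "\<And>g. g \<in> carrier G \<Longrightarrow> f g \<in> H \<Longrightarrow> g = \<one>"
  shows "inj_on (\<lambda>g. H #> f g) (carrier G)"
proof (rule inj_onI)
  fix a b assume ab: "a \<in> carrier G" "b \<in> carrier G" and eq: "H #> f a = H #> f b"
  have f_carr: "f g \<in> carrier G" if "g \<in> carrier G" for g
    using f that unfolding hom_modulo_def by auto
  define c where "c = a \<otimes> inv b"
  have c: "c \<in> carrier G" "a = c \<otimes> b"
    using ab by (simp_all add: c_def m_assoc)
  have "f a \<in> H #> f b"
    using eq rcos_self[OF f_carr[OF ab(1)] H] by simp
  then obtain h where h: "h \<in> H" "f a = h \<otimes> f b"
    unfolding r_coset_def by blast
  obtain h' where h': "h' \<in> H" "f a = h' \<otimes> (f c \<otimes> f b)"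
    using f c ab unfolding hom_modulo_iff by metis
  have carr: "h \<in> carrier G" "h' \<in> carrier G" "f b \<in> carrier G" "f c \<in> carrier G"
    using h(1) h'(1) subgroup.subset[OF H] f_carr ab c by blast+
  have "h = h' \<otimes> f c"
    using h(2) h'(2) carr by (simp flip: m_assoc)
  then have "f c = inv h' \<otimes> h"
    using carr by (simp add: inv_solve_left)
  then have "f c \<in> H"
    using h(1) h'(1) H by (simp add: subgroup.m_closed subgroup.m_inv_closed)
  then have "c = \<one>"
    using ker c(1) by blast
  then show "a = b"
    using c ab by simp
qed

end

lemma (in comm_group) hom_modulo_glue:
  assumes ds: "internal_direct_sum G A B C" and H: "subgroup H G"
    and \<alpha>: "hom_modulo G H A \<alpha>" and \<beta>: "hom_modulo G H B \<beta>"
    and f: "\<And>a b. a \<in> A \<Longrightarrow> b \<in> B \<Longrightarrow> f (a \<otimes> b) = \<alpha> a \<otimes> \<beta> b"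
  shows "hom_modulo G H C f"
  unfolding hom_modulo_iff
proof (intro conjI ballI Pi_I)
  note sub = internal_direct_sumD[OF ds] and carr = internal_direct_sum_subset[OF ds]
  have \<alpha>A: "\<alpha> a \<in> A" if "a \<in> A" for a
    using \<alpha> that unfolding hom_modulo_def by blast
  have \<beta>B: "\<beta> b \<in> B" if "b \<in> B" for b
    using \<beta> that unfolding hom_modulo_def by blast
  show "f c \<in> C" if "c \<in> C" for c
  proof -
    obtain a b where "a \<in> A" "b \<in> B" "c = a \<otimes> b"
      using internal_direct_sum_decomp[OF ds \<open>c \<in> C\<close>] .
    then show ?thesis
      using f \<alpha>A \<beta>B internal_direct_sum_mult_mem[OF ds] by simp
  qed
  fix c c' assume "c \<in> C" "c' \<in> C"
  then obtain a b a' b' where ab: "a \<in> A" "b \<in> B" "a' \<in> A" "b' \<in> B"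
    and c: "c = a \<otimes> b" "c' = a' \<otimes> b'"
    using internal_direct_sum_decomp[OF ds] by metis
  obtain h1 where h1: "h1 \<in> H" "\<alpha> (a \<otimes> a') = h1 \<otimes> (\<alpha> a \<otimes> \<alpha> a')"
    using \<alpha> ab unfolding hom_modulo_iff by blast
  obtain h2 where h2: "h2 \<in> H" "\<beta> (b \<otimes> b') = h2 \<otimes> (\<beta> b \<otimes> \<beta> b')"
    using \<beta> ab unfolding hom_modulo_iff by blast
  have img_carr: "\<alpha> a \<in> carrier G" "\<alpha> a' \<in> carrier G" "\<beta> b \<in> carrier G" "\<beta> b' \<in> carrier G"
    "h1 \<in> carrier G" "h2 \<in> carrier G"
    using ab \<alpha>A \<beta>B carr h1(1) h2(1) subgroup.subset[OF H] by blast+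
  have "a \<in> carrier G" "b \<in> carrier G" "a' \<in> carrier G" "b' \<in> carrier G"
    using ab carr by blast+
  then have "c \<otimes> c' = (a \<otimes> a') \<otimes> (b \<otimes> b')"
    unfolding c by (simp add: m_ac)
  then have "f (c \<otimes> c') = \<alpha> (a \<otimes> a') \<otimes> \<beta> (b \<otimes> b')"
    using f ab sub(1,2) subgroup.m_closed by metis
  also have "\<dots> = (h1 \<otimes> (\<alpha> a \<otimes> \<alpha> a')) \<otimes> (h2 \<otimes> (\<beta> b \<otimes> \<beta> b'))"
    by (simp only: h1 h2)
  also have "\<dots> = (h1 \<otimes> h2) \<otimes> ((\<alpha> a \<otimes> \<beta> b) \<otimes> (\<alpha> a' \<otimes> \<beta> b'))"
    using img_carr by (simp add: m_ac)
  also have "\<dots> = (h1 \<otimes> h2) \<otimes> (f c \<otimes> f c')"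
    unfolding c using f ab by simp
  finally show "\<exists>h\<in>H. f (c \<otimes> c') = h \<otimes> (f c \<otimes> f c')"
    using h1 h2 subgroup.m_closed[OF H] by blast
qed

lemma (in comm_group) hom_modulo_extend_by_identity:
  assumes ds: "internal_direct_sum G Z W C" and H: "subgroup H G" and \<beta>: "hom_modulo G H Z \<beta>"
  obtains \<gamma> where "hom_modulo G H C \<gamma>"
    and "\<And>c z. c \<in> C \<Longrightarrow> z \<in> Z \<Longrightarrow> \<gamma> c = z \<Longrightarrow> c \<in> Z \<and> \<beta> c = z"
proof -
  note sub = internal_direct_sumD[OF ds]
  obtain \<gamma> where \<gamma>: "\<And>z w. z \<in> Z \<Longrightarrow> w \<in> W \<Longrightarrow> \<gamma> (z \<otimes> w) = \<beta> z \<otimes> w"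
    using internal_direct_sum_glue[OF ds, where \<alpha>=\<beta> and \<beta>="\<lambda>w. w"] by blast
  have "hom_modulo G H C \<gamma>"
    using hom_modulo_glue[OF ds H \<beta> hom_modulo_id[OF H subgroup.subset[OF sub(2)]] \<gamma>] .
  moreover have "c \<in> Z \<and> \<beta> c = z" if c: "c \<in> C" and z: "z \<in> Z" "\<gamma> c = z" for c z
  proof -
    obtain z' w where zw: "z' \<in> Z" "w \<in> W" "c = z' \<otimes> w"
      using internal_direct_sum_decomp[OF ds c] .
    have "\<beta> z' \<in> Z"
      using \<beta> zw(1) unfolding hom_modulo_def by blast
    moreover have "\<beta> z' \<otimes> w = z \<otimes> \<one>"
      using \<gamma> zw z internal_direct_sum_subset[OF ds] by auto
    ultimately have "\<beta> z' = z" "w = \<one>"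
      using internal_direct_sum_unique[OF ds _ z(1) zw(2) subgroup.one_closed[OF sub(2)]] by blast+
    then show ?thesis
      using zw internal_direct_sum_subset[OF ds] by auto
  qed
  ultimately show thesis
    using that by blast
qed

section \<open>A cyclic subgroup that is not essential in any summand\<close>

lemma (in group) generate_by_power_of_prime_order:
  assumes p: "Factorial_Ring.prime p" and u: "u \<in> carrier G" "u [^] int p = \<one>"
    and v: "v \<in> generate G {u}" "v \<noteq> \<one>"
  shows "u \<in> generate G {v}"
proof -
  obtain k :: int where k: "v = u [^] k"
    using v(1) generate_pow[OF u(1)] by blast
  have "\<not> int p dvd k"
  proof
    assume "int p dvd k"
    then obtain j where "k = int p * j" ..
    then have "v = (u [^] int p) [^] j"
      using k u(1) by (simp add: int_pow_pow)
    then show False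
      using u(2) v(2) by simp
  qed
  then have "coprime (int p) k"
    using p by (simp add: prime_imp_coprime)
  then obtain a b where ab: "a * k + b * int p = 1"
    using bezout_int[of k "int p"] by (metis coprime_commute coprime_iff_gcd_eq_1)
  have v_carr: "v \<in> carrier G"
    using k u(1) by simp
  have "u = u [^] (k * a) \<otimes> (u [^] int p) [^] b"
    using u(1) ab by (simp add: int_pow_pow flip: int_pow_mult) (simp add: mult.commute)
  also have "\<dots> = v [^] a"
    using k u by (simp add: int_pow_pow)
  finally show ?thesis
    using generate_pow[OF v_carr] by blast
qed

lemma (in group) essential_in_contains_prime_order:
  assumes ess: "essential_in G H S" and p: "Factorial_Ring.prime p"
    and u: "u \<in> S" "u \<noteq> \<one>" "u [^] int p = \<one>"
  shows "u \<in> H"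
proof -
  have sub: "subgroup H G" "subgroup S G" "H \<subseteq> S"
    using ess unfolding essential_in_def by simp_all
  have ess': "H \<inter> K \<noteq> {\<one>}" if "subgroup K G" "K \<subseteq> S" "K \<noteq> {\<one>}" for K
    using ess that unfolding essential_in_def by simp
  have u_carr: "u \<in> carrier G"
    using subgroup.mem_carrier[OF sub(2) u(1)] .
  let ?K = "generate G {u}"
  have K: "subgroup ?K G"
    using generate_is_subgroup u_carr by simp
  have "u \<in> ?K"
    by (rule generate.incl) simp
  moreover have "?K \<subseteq> S"
    using generate_subgroup_incl[OF _ sub(2)] u(1) by simp
  ultimately have "H \<inter> ?K \<noteq> {\<one>}"
    using ess' K u(2) by blast
  moreover have "\<one> \<in> H \<inter> ?K"
    using sub(1) K subgroup.one_closed by blast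
  ultimately obtain v where v: "v \<in> H" "v \<in> ?K" "v \<noteq> \<one>"
    by blast
  have "u \<in> generate G {v}"
    using generate_by_power_of_prime_order[OF p u_carr u(3) v(2,3)] .
  also have "generate G {v} \<subseteq> H"
    using generate_subgroup_incl[OF _ sub(1)] v(1) by blast
  finally show ?thesis .
qed

locale inessential_cyclic = comm_group G for G (structure) +
  fixes Y C :: "'a set" and p n :: nat and y0 z0 :: 'a
  assumes decomp: "internal_direct_sum G Y C (carrier G)"
    and prime: "Factorial_Ring.prime p" and n_pos: "0 < n"
    and y0: "y0 \<in> Y" "ord y0 = p ^ n"
    and Y_exponent: "\<And>y. y \<in> Y \<Longrightarrow> y [^] (int p ^ n) = \<one>"
    and z0: "z0 \<in> C" "p ^ (n + 2) dvd ord z0"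
begin

definition h :: 'a where
  "h = y0 \<otimes> z0 [^] int p"

definition H :: "'a set" where
  "H = generate G {h}"

lemma carrier_facts:
  shows y0_carrier: "y0 \<in> carrier G" and z0_carrier: "z0 \<in> carrier G"
    and h_carrier: "h \<in> carrier G"
  using internal_direct_sum_subset[OF decomp] y0 z0 unfolding h_def by auto

lemma Y_subset: "y \<in> Y \<Longrightarrow> y \<in> carrier G" and C_subset: "c \<in> C \<Longrightarrow> c \<in> carrier G"
  using internal_direct_sum_subset[OF decomp] by auto

lemma Y_int_pow_closed: "y \<in> Y \<Longrightarrow> y [^] (k::int) \<in> Y"
  using internal_direct_sumD(1)[OF decomp] subgroup_int_pow_closed by blast

lemma C_int_pow_closed: "c \<in> C \<Longrightarrow> c [^] (k::int) \<in> C"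
  using internal_direct_sumD(2)[OF decomp] subgroup_int_pow_closed by blast

lemma Y_one: "\<one> \<in> Y" and C_one: "\<one> \<in> C"
  using internal_direct_sumD(1,2)[OF decomp] subgroup.one_closed by blast+

lemma H_subgroup: "subgroup H G"
  unfolding H_def using generate_is_subgroup h_carrier by simp

lemma mem_H_iff: "x \<in> H \<longleftrightarrow> (\<exists>k::int. x = h [^] k)"
  unfolding H_def using generate_pow[OF h_carrier] by blast

lemma h_int_pow: "h [^] (k::int) = y0 [^] k \<otimes> z0 [^] (int p * k)"
  using carrier_facts unfolding h_def by (simp add: int_pow_distrib int_pow_pow)

lemma y0_pow_eq_one_iff: "y0 [^] (k::int) = \<one> \<longleftrightarrow> int p ^ n dvd k"
  using int_pow_eq_id[OF y0_carrier] y0(2) by simp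

lemma y0_pow_n: "y0 [^] (int p ^ n) = \<one>"
  using y0_pow_eq_one_iff by simp

lemma y0_pow_ne_one: "y0 [^] (int p ^ (n - 1)) \<noteq> \<one>"
proof
  assume "y0 [^] (int p ^ (n - 1)) = \<one>"
  then have "p ^ n dvd p ^ (n - 1)"
    using y0_pow_eq_one_iff by (metis int_dvd_int_iff of_nat_power)
  then have "n \<le> n - 1"
    using dvd_power_iff_le prime_ge_2_nat[OF prime] by blast
  then show False
    using n_pos by simp
qed

lemma z0_pow_eq_one_imp: "z0 [^] (int p ^ 2 * k) = \<one> \<Longrightarrow> int p ^ n dvd k"
proof -
  assume "z0 [^] (int p ^ 2 * k) = \<one>"
  then have "int p ^ 2 * int p ^ n dvd int p ^ 2 * k"
    using int_pow_eq_id[OF z0_carrier] z0(2)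
    by (metis dvd_trans int_dvd_int_iff of_nat_power power_add add.commute)
  then show ?thesis
    using prime prime_gt_0_nat by simp
qed

lemma p_power_minus_one: "int p ^ (n - 1) * int p = int p ^ n"
  using n_pos by (simp flip: power_Suc2)

lemma h_root_not_power:
  assumes g: "g \<in> carrier G"
  shows "h [^] (int p ^ (n - 1)) \<noteq> g [^] (int p ^ n)"
proof
  assume eq: "h [^] (int p ^ (n - 1)) = g [^] (int p ^ n)"
  obtain y c where yc: "y \<in> Y" "c \<in> C" "g = y \<otimes> c"
    using internal_direct_sum_decomp[OF decomp] g by blast
  have "g [^] (int p ^ n) = \<one> \<otimes> c [^] (int p ^ n)"
    using yc Y_exponent Y_subset C_subset by (simp add: int_pow_distrib)
  moreover have "h [^] (int p ^ (n - 1)) = y0 [^] (int p ^ (n - 1)) \<otimes> z0 [^] (int p ^ n)"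
    using h_int_pow p_power_minus_one by (simp add: mult.commute)
  ultimately have "y0 [^] (int p ^ (n - 1)) = \<one>"
    using internal_direct_sum_unique(1)[OF decomp] eq y0(1) yc(2) z0(1)
      Y_int_pow_closed C_int_pow_closed Y_one by metis
  then show False
    using y0_pow_ne_one by contradiction
qed

lemma H_socle_divisible:
  assumes x: "x \<in> H" "x [^] int p = \<one>"
  shows "\<exists>r\<in>carrier G. x = r [^] (int p ^ n)"
proof -
  obtain k :: int where k: "x = h [^] k"
    using x(1) mem_H_iff by blast
  have "x [^] int p = y0 [^] (k * int p) \<otimes> z0 [^] (int p ^ 2 * k)"
    using k h_int_pow carrier_facts by (simp add: int_pow_distrib int_pow_pow power2_eq_square mult_ac)
  then have "y0 [^] (k * int p) \<otimes> z0 [^] (int p ^ 2 * k) = \<one> \<otimes> \<one>"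
    using x(2) by (metis l_one one_closed)
  then have "z0 [^] (int p ^ 2 * k) = \<one>"
    using internal_direct_sum_unique(2)[OF decomp Y_int_pow_closed[OF y0(1)] Y_one
        C_int_pow_closed[OF z0(1)] C_one] by blast
  then obtain j where j: "k = int p ^ n * j"
    using z0_pow_eq_one_imp by blast
  then have "y0 [^] k = \<one>"
    using y0_pow_eq_one_iff by simp
  then have "x = z0 [^] (int p * k)"
    using k h_int_pow z0_carrier by simp
  also have "\<dots> = (z0 [^] (int p * j)) [^] (int p ^ n)"
    using j z0_carrier by (simp add: int_pow_pow mult_ac)
  finally show ?thesis
    using z0_carrier by blast
qed

lemma h_power_in_summand:
  assumes ST: "internal_direct_sum G S T (carrier G)" and h: "h \<in> S"
  obtains s where "s \<in> S" "h [^] (int p ^ n) = s [^] (int p ^ Suc n)"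
proof -
  note sub = internal_direct_sumD[OF ST]
  obtain s t where st: "s \<in> S" "t \<in> T" and z0_st: "z0 = s \<otimes> t"
    using internal_direct_sum_decomp[OF ST] z0_carrier by blast
  have st_carr: "s \<in> carrier G" "t \<in> carrier G"
    using st internal_direct_sum_subset[OF ST] by blast+
  have "h [^] (int p ^ n) = z0 [^] (int p ^ Suc n)"
    using h_int_pow[of "int p ^ n"] y0_pow_n z0_carrier by simp
  then have h_pow_st: "h [^] (int p ^ n) = s [^] (int p ^ Suc n) \<otimes> t [^] (int p ^ Suc n)"
    unfolding z0_st using st_carr by (simp add: int_pow_distrib)
  have "t [^] (int p ^ Suc n) = \<one>"
    using internal_direct_sum_component_trivial[OF ST subgroup_int_pow_closed[OF sub(1) st(1)]
        subgroup_int_pow_closed[OF sub(2) st(2)]] subgroup_int_pow_closed[OF sub(1) h, of "int p ^ n"]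
    unfolding h_pow_st by blast
  then show thesis
    using that st(1) h_pow_st st_carr by simp
qed

lemma H_not_essential:
  assumes "direct_summand G S"
  shows "\<not> essential_in G H S"
proof
  assume ess: "essential_in G H S"
  obtain T where ST: "internal_direct_sum G S T (carrier G)"
    using assms unfolding direct_summand_def by blast
  have S: "subgroup S G"
    using internal_direct_sumD(1)[OF ST] .
  have "h \<in> S"
    using ess h_carrier unfolding essential_in_def H_def by (auto intro: generate.incl)
  then obtain s where s: "s \<in> S" "h [^] (int p ^ n) = s [^] (int p ^ Suc n)"
    using h_power_in_summand[OF ST] by blast
  have s_carr: "s \<in> carrier G"
    using subgroup.mem_carrier[OF S s(1)] .
  define u where "u = h [^] (int p ^ (n - 1)) \<otimes> inv (s [^] (int p ^ n))"
  have "u \<in> S"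
    unfolding u_def using \<open>h \<in> S\<close> s(1) S
    by (simp add: subgroup_int_pow_closed subgroup.m_closed subgroup.m_inv_closed)
  moreover have "u [^] int p = \<one>"
    unfolding u_def using s(2) h_carrier s_carr p_power_minus_one
    by (simp add: int_pow_distrib int_pow_pow int_pow_inv mult.commute)
  moreover have "u \<noteq> \<one>"
    using h_root_not_power[OF s_carr] h_carrier s_carr unfolding u_def
    by (simp add: inv_solve_right')
  ultimately have "u \<in> H"
    using essential_in_contains_prime_order[OF ess prime] by blast
  then obtain r where r: "r \<in> carrier G" "u = r [^] (int p ^ n)"
    using H_socle_divisible \<open>u [^] int p = \<one>\<close> by blast
  have "h [^] (int p ^ (n - 1)) = u \<otimes> s [^] (int p ^ n)"
    unfolding u_def using h_carrier s_carr by (simp add: m_assoc)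
  also have "\<dots> = (r \<otimes> s) [^] (int p ^ n)"
    using r s_carr by (simp add: int_pow_distrib)
  finally show False
    using h_root_not_power[of "r \<otimes> s"] r(1) s_carr by simp
qed

theorem not_semi_generalized_bassian:
  assumes \<alpha>: "hom_modulo G H Y \<alpha>" and \<gamma>: "hom_modulo G H C \<gamma>"
    and ker: "\<And>y c k. y \<in> Y \<Longrightarrow> c \<in> C \<Longrightarrow> \<alpha> y = y0 [^] k \<Longrightarrow> \<gamma> c = z0 [^] (int p * k)
      \<Longrightarrow> y = \<one> \<and> c = \<one>"
  shows "\<not> semi_generalized_bassian G"
proof
  obtain \<Phi> where \<Phi>: "\<And>y c. y \<in> Y \<Longrightarrow> c \<in> C \<Longrightarrow> \<Phi> (y \<otimes> c) = \<alpha> y \<otimes> \<gamma> c"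
    using internal_direct_sum_glue[OF decomp, where \<alpha>=\<alpha> and \<beta>=\<gamma>] by blast
  have \<Phi>_hom: "hom_modulo G H (carrier G) \<Phi>"
    using hom_modulo_glue[OF decomp H_subgroup \<alpha> \<gamma> \<Phi>] .
  have "g = \<one>" if g: "g \<in> carrier G" "\<Phi> g \<in> H" for g
  proof -
    obtain y c where yc: "y \<in> Y" "c \<in> C" "g = y \<otimes> c"
      using internal_direct_sum_decomp[OF decomp g(1)] .
    obtain k :: int where "\<Phi> g = h [^] k"
      using g(2) mem_H_iff by blast
    then have "\<alpha> y \<otimes> \<gamma> c = y0 [^] k \<otimes> z0 [^] (int p * k)"
      using \<Phi> yc h_int_pow by simp
    moreover have "\<alpha> y \<in> Y" "\<gamma> c \<in> C"
      using \<alpha> \<gamma> yc unfolding hom_modulo_def by blast+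
    ultimately have "\<alpha> y = y0 [^] k" "\<gamma> c = z0 [^] (int p * k)"
      using internal_direct_sum_unique[OF decomp _ Y_int_pow_closed[OF y0(1)] _
          C_int_pow_closed[OF z0(1)]] by blast+
    then have "y = \<one>" "c = \<one>"
      using ker yc by blast+
    then show ?thesis
      using yc by simp
  qed
  then have "(\<lambda>g. H #> \<Phi> g) \<in> hom G (G Mod H)" "inj_on (\<lambda>g. H #> \<Phi> g) (carrier G)"
    using hom_modulo_coset_hom[OF subgroup_imp_normal[OF H_subgroup] \<Phi>_hom]
      hom_modulo_coset_inj[OF H_subgroup \<Phi>_hom] by blast+
  moreover assume "semi_generalized_bassian G"
  ultimately obtain S where "direct_summand G S" "essential_in G H S"
    using H_subgroup unfolding semi_generalized_bassian_def by blast
  then show False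
    using H_not_essential by blast
qed

lemma p_root_hom_moduloE:
  assumes Z: "subgroup Z G"
    and divisible: "\<And>z. z \<in> Z \<Longrightarrow> \<exists>w\<in>Z. w [^] int p = z"
    and socle: "\<And>c. c \<in> Z \<Longrightarrow> c [^] int p = \<one> \<Longrightarrow> \<exists>j::int. c = z0 [^] (int p ^ (n + 1) * j)"
  obtains r where "hom_modulo G H Z r" "\<And>z. z \<in> Z \<Longrightarrow> r z [^] int p = z"
proof -
  define r where "r z = (SOME w. w \<in> Z \<and> w [^] int p = z)" for z
  have r: "r z \<in> Z" "r z [^] int p = z" if "z \<in> Z" for z
    using someI_ex[OF divisible[OF that, unfolded Bex_def]] unfolding r_def by blast+
  have "hom_modulo G H Z r"
    unfolding hom_modulo_iff
  proof (intro conjI ballI Pi_I)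
    show "r z \<in> Z" if "z \<in> Z" for z
      using r that by blast
    fix z1 z2 assume z: "z1 \<in> Z" "z2 \<in> Z"
    have z12: "z1 \<otimes> z2 \<in> Z"
      using subgroup.m_closed[OF Z z] .
    have carr: "r z1 \<in> carrier G" "r z2 \<in> carrier G" "r (z1 \<otimes> z2) \<in> carrier G"
      using r z z12 subgroup.mem_carrier[OF Z] by blast+
    define c where "c = r (z1 \<otimes> z2) \<otimes> inv (r z1 \<otimes> r z2)"
    have "c \<in> Z"
      unfolding c_def using r z z12 Z by (simp add: subgroup.m_closed subgroup.m_inv_closed)
    moreover have "c [^] int p = \<one>"
      unfolding c_def using r z z12 carr subgroup.mem_carrier[OF Z]
      by (simp add: int_pow_distrib int_pow_inv)
    ultimately obtain j where j: "c = z0 [^] (int p ^ (n + 1) * j)"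
      using socle by blast
    have "y0 [^] (int p ^ n * j) = \<one>"
      using y0_pow_eq_one_iff by simp
    then have "h [^] (int p ^ n * j) = c"
      unfolding j h_int_pow using z0_carrier by (simp add: mult_ac)
    then have "c \<in> H"
      using mem_H_iff by blast
    moreover have "r (z1 \<otimes> z2) = c \<otimes> (r z1 \<otimes> r z2)"
      unfolding c_def using carr by (simp add: m_assoc)
    ultimately show "\<exists>c\<in>H. r (z1 \<otimes> z2) = c \<otimes> (r z1 \<otimes> r z2)"
      by blast
  qed
  then show thesis
    using that r by blast
qed

end

section \<open>Transport along an isomorphism onto a subgroup\<close>

lemma (in group) ord_eqI:
  assumes "x \<in> carrier G" "\<And>k::int. x [^] k = \<one> \<longleftrightarrow> int d dvd k"
  shows "ord x = d"
  using int_pow_eq_id[OF assms(1)] assms(2) by (metis dvd_antisym dvd_refl int_dvd_int_iff)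

locale subgroup_iso = group G for G (structure) +
  fixes M :: "('c, 'd) monoid_scheme" and S :: "'a set" and \<psi> :: "'c \<Rightarrow> 'a"
  assumes M_group: "group M" and S_subgroup: "subgroup S G"
    and iso: "\<psi> \<in> iso M (G\<lparr>carrier := S\<rparr>)"

lemma (in group) subgroup_isoE:
  assumes "subgroup S G" "G\<lparr>carrier := S\<rparr> \<cong> M" "group M"
  obtains \<psi> where "subgroup_iso G M S \<psi>"
proof -
  obtain \<phi> where "\<phi> \<in> iso (G\<lparr>carrier := S\<rparr>) M"
    using assms(2) unfolding is_iso_def by blast
  then have "inv_into S \<phi> \<in> iso M (G\<lparr>carrier := S\<rparr>)"
    using group.iso_set_sym[OF subgroup_imp_group[OF assms(1)]] by simp
  then show thesis
    using that assms unfolding subgroup_iso_def subgroup_iso_axioms_def by simp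
qed

context subgroup_iso
begin

lemma \<psi>_hom: "\<psi> \<in> hom M (G\<lparr>carrier := S\<rparr>)"
  using iso by (simp add: iso_iff)

lemma \<psi>_image: "\<psi> ` carrier M = S"
  using iso by (simp add: iso_iff)

lemma \<psi>_inj: "inj_on \<psi> (carrier M)"
  using iso by (simp add: iso_iff)

lemma \<psi>_mem: "x \<in> carrier M \<Longrightarrow> \<psi> x \<in> S"
  using \<psi>_image by blast

lemma \<psi>_int_pow: "x \<in> carrier M \<Longrightarrow> \<psi> (x [^]\<^bsub>M\<^esub> (k::int)) = \<psi> x [^] k"
  using hom_int_pow[OF \<psi>_hom _ M_group subgroup_imp_group[OF S_subgroup]]
    int_pow_consistent[OF S_subgroup \<psi>_mem] by simp

lemma \<psi>_one: "\<psi> \<one>\<^bsub>M\<^esub> = \<one>"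
  using \<psi>_int_pow[of "\<one>\<^bsub>M\<^esub>" 0] group.is_monoid[OF M_group] monoid.one_closed by fastforce

lemma \<psi>_int_pow_eq_one_iff:
  assumes "x \<in> carrier M"
  shows "\<psi> x [^] (k::int) = \<one> \<longleftrightarrow> x [^]\<^bsub>M\<^esub> k = \<one>\<^bsub>M\<^esub>"
  using inj_on_eq_iff[OF \<psi>_inj group.int_pow_closed[OF M_group assms] monoid.one_closed[OF group.is_monoid[OF M_group]]]
  by (simp add: \<psi>_int_pow[OF assms] \<psi>_one)

lemma ord_\<psi>:
  assumes "x \<in> carrier M"
  shows "ord (\<psi> x) = group.ord M x"
proof (rule ord_eqI)
  show "\<psi> x \<in> carrier G"
    using \<psi>_mem[OF assms] subgroup.mem_carrier[OF S_subgroup] by blast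
  show "\<psi> x [^] k = \<one> \<longleftrightarrow> int (group.ord M x) dvd k" for k :: int
    using group.int_pow_eq_id[OF M_group assms] \<psi>_int_pow_eq_one_iff[OF assms] by simp
qed

lemma exponent_transfer:
  assumes "\<And>x. x \<in> carrier M \<Longrightarrow> x [^]\<^bsub>M\<^esub> (Q::int) = \<one>\<^bsub>M\<^esub>" "y \<in> S"
  shows "y [^] Q = \<one>"
  using assms \<psi>_image \<psi>_int_pow_eq_one_iff by blast

lemma divisible_transfer:
  assumes "\<And>x. x \<in> carrier M \<Longrightarrow> \<exists>w\<in>carrier M. w [^]\<^bsub>M\<^esub> (Q::int) = x" "z \<in> S"
  shows "\<exists>w\<in>S. w [^] Q = z"
proof -
  obtain x where x: "x \<in> carrier M" "z = \<psi> x"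
    using assms(2) \<psi>_image by blast
  then obtain w where "w \<in> carrier M" "w [^]\<^bsub>M\<^esub> Q = x"
    using assms(1) by blast
  then show ?thesis
    using x \<psi>_mem \<psi>_int_pow by metis
qed

lemma socle_transfer:
  assumes e: "e \<in> carrier M"
    and socle: "\<And>c. c \<in> carrier M \<Longrightarrow> c [^]\<^bsub>M\<^esub> (P::int) = \<one>\<^bsub>M\<^esub> \<Longrightarrow> \<exists>j::int. c = e [^]\<^bsub>M\<^esub> (Q * j)"
    and c: "c \<in> S" "c [^] P = \<one>"
  shows "\<exists>j::int. c = \<psi> e [^] (Q * j)"
proof -
  obtain x where x: "x \<in> carrier M" "c = \<psi> x"
    using c(1) \<psi>_image by blast
  then obtain j where "x = e [^]\<^bsub>M\<^esub> (Q * j)"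
    using socle c(2) \<psi>_int_pow_eq_one_iff by blast
  then show ?thesis
    using x \<psi>_int_pow[OF e] by blast
qed

lemma avoiding_mon_transfer:
  assumes e: "e \<in> carrier M" and \<zeta>: "\<zeta> \<in> mon M M"
    and avoid: "\<And>k::int. e [^]\<^bsub>M\<^esub> k \<in> \<zeta> ` carrier M \<Longrightarrow> e [^]\<^bsub>M\<^esub> k = \<one>\<^bsub>M\<^esub>"
  shows "\<exists>\<xi> \<in> mon (G\<lparr>carrier := S\<rparr>) (G\<lparr>carrier := S\<rparr>).
           \<forall>k::int. \<psi> e [^] k \<in> \<xi> ` S \<longrightarrow> \<psi> e [^] k = \<one>"
proof
  define \<phi> where "\<phi> = inv_into (carrier M) \<psi>"
  have \<phi>: "\<phi> \<in> iso (G\<lparr>carrier := S\<rparr>) M"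
    unfolding \<phi>_def using group.iso_set_sym[OF M_group iso] .
  have \<phi>_mon: "\<phi> \<in> mon (G\<lparr>carrier := S\<rparr>) M" and \<psi>_mon: "\<psi> \<in> mon M (G\<lparr>carrier := S\<rparr>)"
    using \<phi> iso by (simp_all add: iso_iff_mon_epi)
  have "(\<psi> \<circ> \<zeta> \<circ> \<phi>) ` S = \<psi> ` \<zeta> ` \<phi> ` S"
    by (simp add: image_image)
  also have "\<phi> ` S = carrier M"
    using \<phi> by (simp add: iso_iff)
  finally have image: "(\<psi> \<circ> \<zeta> \<circ> \<phi>) ` S = \<psi> ` \<zeta> ` carrier M" .
  show "\<psi> \<circ> \<zeta> \<circ> \<phi> \<in> mon (G\<lparr>carrier := S\<rparr>) (G\<lparr>carrier := S\<rparr>)"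
    using mon_compose[OF \<phi>_mon mon_compose[OF \<zeta> \<psi>_mon]] .
  show "\<forall>k::int. \<psi> e [^] k \<in> (\<psi> \<circ> \<zeta> \<circ> \<phi>) ` S \<longrightarrow> \<psi> e [^] k = \<one>"
  proof (intro allI impI)
    fix k :: int assume "\<psi> e [^] k \<in> (\<psi> \<circ> \<zeta> \<circ> \<phi>) ` S"
    then obtain x where x: "x \<in> carrier M" "\<psi> (e [^]\<^bsub>M\<^esub> k) = \<psi> (\<zeta> x)"
      using image \<psi>_int_pow[OF e] by auto
    have "\<zeta> x \<in> carrier M"
      using \<zeta> x(1) unfolding mon_def hom_def by auto
    then have "e [^]\<^bsub>M\<^esub> k = \<zeta> x"
      using inj_onD[OF \<psi>_inj x(2)] group.int_pow_closed[OF M_group e] by blast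
    then show "\<psi> e [^] k = \<one>"
      using avoid x(1) \<psi>_int_pow_eq_one_iff[OF e] by blast
  qed
qed

end

section \<open>The model groups\<close>

lemma ord_one_integer_mod_group:
  assumes "1 < q"
  shows "group.ord (integer_mod_group q) 1 = q"
  using assms by (intro group.ord_eqI) (simp_all add: int_pow_integer_mod_group dvd_eq_mod_eq_0)

lemma integer_mod_group_exponent:
  "x [^]\<^bsub>integer_mod_group q\<^esub> (int q) = \<one>\<^bsub>integer_mod_group q\<^esub>"
  by (simp add: int_pow_integer_mod_group)

lemma infinite_shift:
  assumes "infinite I"
  obtains \<sigma> i0 where "i0 \<in> I" "\<sigma> ` I \<subseteq> I" "inj_on \<sigma> I" "i0 \<notin> \<sigma> ` I"
proof -
  obtain B where "B \<subset> I" "I \<approx> B"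
    using assms unfolding infinite_iff_psubset by blast
  then obtain \<sigma> where \<sigma>: "inj_on \<sigma> I" "\<sigma> ` I = B"
    unfolding eqpoll_def bij_betw_def by blast
  obtain i0 where "i0 \<in> I" "i0 \<notin> B"
    using \<open>B \<subset> I\<close> by blast
  then show thesis
    using that[of i0 \<sigma>] \<sigma> \<open>B \<subset> I\<close> by simp
qed

context
  fixes K :: "('a, 'b) monoid_scheme" and I :: "'i set"
  assumes K: "group K"
begin

abbreviation sum_copies where "sum_copies \<equiv> sum_group I (\<lambda>_. K)"

lemma sum_copies_group: "group sum_copies"
  using K by simp

lemma carrier_sum_copies: "carrier sum_copies = {x \<in> \<Pi>\<^sub>E i\<in>I. carrier K. finite {i \<in> I. x i \<noteq> \<one>\<^bsub>K\<^esub>}}"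
  using K by (simp add: carrier_sum_group)

lemma sum_copies_int_pow_component:
  assumes "x \<in> carrier sum_copies" "i \<in> I"
  shows "(x [^]\<^bsub>sum_copies\<^esub> (k::int)) i = x i [^]\<^bsub>K\<^esub> k"
proof -
  have "(\<lambda>x. x i) \<in> hom sum_copies K"
    using assms(2) by (intro homI) (auto simp: carrier_sum_copies)
  from hom_int_pow[OF this assms(1) sum_copies_group K] show ?thesis
    by simp
qed

lemma sum_copies_eq_one_iff:
  assumes "x \<in> carrier sum_copies"
  shows "x = \<one>\<^bsub>sum_copies\<^esub> \<longleftrightarrow> (\<forall>i\<in>I. x i = \<one>\<^bsub>K\<^esub>)"
  using assms by (auto simp: carrier_sum_copies PiE_def extensional_def)

lemma sum_copies_exponent:
  assumes Q: "\<And>y. y \<in> carrier K \<Longrightarrow> y [^]\<^bsub>K\<^esub> (Q::int) = \<one>\<^bsub>K\<^esub>" and x: "x \<in> carrier sum_copies"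
  shows "x [^]\<^bsub>sum_copies\<^esub> Q = \<one>\<^bsub>sum_copies\<^esub>"
proof -
  have "x i \<in> carrier K" if "i \<in> I" for i
    using x that by (auto simp: carrier_sum_copies)
  then show ?thesis
    using Q sum_copies_int_pow_component[OF x] sum_copies_eq_one_iff[OF group.int_pow_closed[OF sum_copies_group x]]
    by simp
qed

definition shift_copies :: "('i \<Rightarrow> 'i) \<Rightarrow> ('i \<Rightarrow> 'a) \<Rightarrow> 'i \<Rightarrow> 'a" where
  "shift_copies \<sigma> x = (\<lambda>j\<in>I. if j \<in> \<sigma> ` I then x (inv_into I \<sigma> j) else \<one>\<^bsub>K\<^esub>)"

context
  fixes \<sigma> :: "'i \<Rightarrow> 'i"
  assumes \<sigma>: "\<sigma> ` I \<subseteq> I" "inj_on \<sigma> I"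
begin

lemma shift_copies_apply: "i \<in> I \<Longrightarrow> shift_copies \<sigma> x (\<sigma> i) = x i"
  using \<sigma> unfolding shift_copies_def by auto

lemma shift_copies_carrier:
  assumes x: "x \<in> carrier sum_copies"
  shows "shift_copies \<sigma> x \<in> carrier sum_copies"
proof -
  have "{j \<in> I. shift_copies \<sigma> x j \<noteq> \<one>\<^bsub>K\<^esub>} \<subseteq> \<sigma> ` {i \<in> I. x i \<noteq> \<one>\<^bsub>K\<^esub>}"
  proof
    fix j assume j: "j \<in> {j \<in> I. shift_copies \<sigma> x j \<noteq> \<one>\<^bsub>K\<^esub>}"
    then obtain i where "i \<in> I" "j = \<sigma> i"
      unfolding shift_copies_def by (auto split: if_splits)
    then show "j \<in> \<sigma> ` {i \<in> I. x i \<noteq> \<one>\<^bsub>K\<^esub>}"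
      using j shift_copies_apply by auto
  qed
  then have "finite {j \<in> I. shift_copies \<sigma> x j \<noteq> \<one>\<^bsub>K\<^esub>}"
    using x finite_subset unfolding carrier_sum_copies by blast
  moreover have "shift_copies \<sigma> x \<in> (\<Pi>\<^sub>E i\<in>I. carrier K)"
    using x K \<sigma> unfolding shift_copies_def carrier_sum_copies
    by (auto simp: inv_into_into group.is_monoid monoid.one_closed PiE_iff)
  ultimately show ?thesis
    by (simp add: carrier_sum_copies)
qed

lemma shift_copies_mon: "shift_copies \<sigma> \<in> mon sum_copies sum_copies"
proof -
  have one_mult: "\<one>\<^bsub>K\<^esub> \<otimes>\<^bsub>K\<^esub> \<one>\<^bsub>K\<^esub> = \<one>\<^bsub>K\<^esub>"
    using K by (simp add: group.is_monoid monoid.l_one monoid.one_closed)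
  have "shift_copies \<sigma> (x \<otimes>\<^bsub>sum_copies\<^esub> y) = shift_copies \<sigma> x \<otimes>\<^bsub>sum_copies\<^esub> shift_copies \<sigma> y" for x y
  proof
    fix j
    show "shift_copies \<sigma> (x \<otimes>\<^bsub>sum_copies\<^esub> y) j = (shift_copies \<sigma> x \<otimes>\<^bsub>sum_copies\<^esub> shift_copies \<sigma> y) j"
      by (cases "j \<in> I"; cases "j \<in> \<sigma> ` I") (simp_all add: shift_copies_def inv_into_into one_mult)
  qed
  then have "shift_copies \<sigma> \<in> hom sum_copies sum_copies"
    using shift_copies_carrier by (intro homI)
  moreover have "inj_on (shift_copies \<sigma>) (carrier sum_copies)"
  proof (rule inj_onI)
    fix x y assume xy: "x \<in> carrier sum_copies" "y \<in> carrier sum_copies" "shift_copies \<sigma> x = shift_copies \<sigma> y"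
    then have "x i = y i" if "i \<in> I" for i
      using shift_copies_apply[OF that] by metis
    moreover have "x \<in> extensional I" "y \<in> extensional I"
      using xy(1,2) by (auto simp: carrier_sum_copies PiE_def)
    ultimately show "x = y"
      by (rule extensionalityI[rotated 2]) auto
  qed
  ultimately show ?thesis
    unfolding mon_def by blast
qed

end

definition single_copy :: "'i \<Rightarrow> 'a \<Rightarrow> 'i \<Rightarrow> 'a" where
  "single_copy i0 a = (\<lambda>j\<in>I. if j = i0 then a else \<one>\<^bsub>K\<^esub>)"

context
  fixes i0 a
  assumes i0: "i0 \<in> I" and a: "a \<in> carrier K"
begin

lemma single_copy_carrier: "single_copy i0 a \<in> carrier sum_copies"
proof -
  have "{i \<in> I. single_copy i0 a i \<noteq> \<one>\<^bsub>K\<^esub>} \<subseteq> {i0}"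
    by (auto simp: single_copy_def)
  then show ?thesis
    using a K finite_subset
    by (auto simp: carrier_sum_copies single_copy_def group.is_monoid monoid.one_closed)
qed

lemma single_copy_int_pow_component:
  assumes "i \<in> I"
  shows "(single_copy i0 a [^]\<^bsub>sum_copies\<^esub> (k::int)) i = (if i = i0 then a [^]\<^bsub>K\<^esub> k else \<one>\<^bsub>K\<^esub>)"
  using sum_copies_int_pow_component[OF single_copy_carrier assms] assms group.int_pow_one[OF K]
  by (simp add: single_copy_def)

lemma single_copy_int_pow_eq_one_iff:
  "single_copy i0 a [^]\<^bsub>sum_copies\<^esub> (k::int) = \<one>\<^bsub>sum_copies\<^esub> \<longleftrightarrow> a [^]\<^bsub>K\<^esub> k = \<one>\<^bsub>K\<^esub>"
  using sum_copies_eq_one_iff[OF group.int_pow_closed[OF sum_copies_group single_copy_carrier]]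
    single_copy_int_pow_component i0 by auto

lemma ord_single_copy: "group.ord sum_copies (single_copy i0 a) = group.ord K a"
  using single_copy_int_pow_eq_one_iff group.int_pow_eq_id[OF K a]
  by (intro group.ord_eqI[OF sum_copies_group single_copy_carrier]) simp

end

lemma sum_copies_avoiding_mon:
  assumes I: "infinite I" and a: "a \<in> carrier K"
  shows "\<exists>e\<in>carrier sum_copies. group.ord sum_copies e = group.ord K a \<and>
    (\<exists>\<zeta>\<in>mon sum_copies sum_copies. \<forall>k::int.
       e [^]\<^bsub>sum_copies\<^esub> k \<in> \<zeta> ` carrier sum_copies \<longrightarrow> e [^]\<^bsub>sum_copies\<^esub> k = \<one>\<^bsub>sum_copies\<^esub>)"
proof -
  obtain \<sigma> i0 where \<sigma>: "i0 \<in> I" "\<sigma> ` I \<subseteq> I" "inj_on \<sigma> I" "i0 \<notin> \<sigma> ` I"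
    by (rule infinite_shift[OF I])
  have "single_copy i0 a [^]\<^bsub>sum_copies\<^esub> k = \<one>\<^bsub>sum_copies\<^esub>"
    if img: "single_copy i0 a [^]\<^bsub>sum_copies\<^esub> k \<in> shift_copies \<sigma> ` carrier sum_copies" for k :: int
  proof -
    obtain x where "single_copy i0 a [^]\<^bsub>sum_copies\<^esub> k = shift_copies \<sigma> x"
      using img by blast
    then have "a [^]\<^bsub>K\<^esub> k = \<one>\<^bsub>K\<^esub>"
      using single_copy_int_pow_component[OF \<sigma>(1) a \<sigma>(1), of k] \<sigma>(1,4)
      by (simp add: shift_copies_def)
    then show ?thesis
      using single_copy_int_pow_eq_one_iff[OF \<sigma>(1) a] by blast
  qed
  then show ?thesis
    using single_copy_carrier[OF \<sigma>(1) a] ord_single_copy[OF \<sigma>(1) a] shift_copies_mon[OF \<sigma>(2,3)]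
    by blast
qed

end

definition p_power_fractions :: "nat \<Rightarrow> rat set" where
  "p_power_fractions p = {of_int a / of_nat (p ^ k) | a k. True}"

lemma carrier_quasicyclic_group:
  "carrier (quasicyclic_group p) = {x. 0 \<le> x \<and> x < 1 \<and> x \<in> p_power_fractions p}"
  by (simp add: quasicyclic_group_def p_power_fractions_def)

lemma mult_quasicyclic_group [simp]: "x \<otimes>\<^bsub>quasicyclic_group p\<^esub> y = frac (x + y)"
  by (simp add: quasicyclic_group_def)

lemma one_quasicyclic_group [simp]: "\<one>\<^bsub>quasicyclic_group p\<^esub> = 0"
  by (simp add: quasicyclic_group_def)

lemma of_int_in_p_power_fractions: "of_int a \<in> p_power_fractions p"
  unfolding p_power_fractions_def by (rule CollectI, rule exI[of _ a], rule exI[of _ 0]) simp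

lemma p_power_fractions_add:
  assumes "p > 0" "x \<in> p_power_fractions p" "y \<in> p_power_fractions p"
  shows "x + y \<in> p_power_fractions p"
proof -
  obtain a k b l where xy: "x = of_int a / of_nat (p ^ k)" "y = of_int b / of_nat (p ^ l)"
    using assms unfolding p_power_fractions_def by blast
  have "x + y = of_int (a * int (p ^ l) + b * int (p ^ k)) / of_nat (p ^ (k + l))"
    unfolding xy using assms(1) by (simp add: field_simps power_add)
  then show ?thesis
    unfolding p_power_fractions_def by blast
qed

lemma p_power_fractions_uminus:
  assumes "x \<in> p_power_fractions p"
  shows "- x \<in> p_power_fractions p"
proof -
  obtain a k where "x = of_int a / of_nat (p ^ k)"
    using assms unfolding p_power_fractions_def by blast
  then have "- x = of_int (- a) / of_nat (p ^ k)"
    by simp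
  then show ?thesis
    unfolding p_power_fractions_def by blast
qed

lemma frac_in_p_power_fractions:
  assumes "p > 0" "x \<in> p_power_fractions p"
  shows "frac x \<in> p_power_fractions p"
proof -
  have "x + of_int (- \<lfloor>x\<rfloor>) \<in> p_power_fractions p"
    by (rule p_power_fractions_add[OF assms of_int_in_p_power_fractions])
  then show ?thesis
    by (simp add: frac_def)
qed

lemma frac_in_quasicyclic_group:
  "p > 0 \<Longrightarrow> x \<in> p_power_fractions p \<Longrightarrow> frac x \<in> carrier (quasicyclic_group p)"
  by (simp add: carrier_quasicyclic_group frac_lt_1 frac_in_p_power_fractions)

lemma group_quasicyclic_group:
  assumes p: "p > 0"
  shows "group (quasicyclic_group p)"
proof (rule groupI)
  fix x y z
  assume x: "x \<in> carrier (quasicyclic_group p)"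
  then have x': "0 \<le> x" "x < 1" "x \<in> p_power_fractions p"
    by (simp_all add: carrier_quasicyclic_group)
  show "\<one>\<^bsub>quasicyclic_group p\<^esub> \<otimes>\<^bsub>quasicyclic_group p\<^esub> x = x"
    using x' by (simp add: frac_eq)
  show "\<exists>y\<in>carrier (quasicyclic_group p). y \<otimes>\<^bsub>quasicyclic_group p\<^esub> x = \<one>\<^bsub>quasicyclic_group p\<^esub>"
  proof
    show "frac (- x) \<otimes>\<^bsub>quasicyclic_group p\<^esub> x = \<one>\<^bsub>quasicyclic_group p\<^esub>"
      by simp
    show "frac (- x) \<in> carrier (quasicyclic_group p)"
      using frac_in_quasicyclic_group[OF p p_power_fractions_uminus[OF x'(3)]] .
  qed
  assume y: "y \<in> carrier (quasicyclic_group p)"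
  then have "x + y \<in> p_power_fractions p"
    using x' p by (simp add: carrier_quasicyclic_group p_power_fractions_add)
  then show "x \<otimes>\<^bsub>quasicyclic_group p\<^esub> y \<in> carrier (quasicyclic_group p)"
    using frac_in_quasicyclic_group[OF p] by simp
next
  show "\<one>\<^bsub>quasicyclic_group p\<^esub> \<in> carrier (quasicyclic_group p)"
    using of_int_in_p_power_fractions[of 0] by (simp add: carrier_quasicyclic_group)
  show "x \<otimes>\<^bsub>quasicyclic_group p\<^esub> y \<otimes>\<^bsub>quasicyclic_group p\<^esub> z =
        x \<otimes>\<^bsub>quasicyclic_group p\<^esub> (y \<otimes>\<^bsub>quasicyclic_group p\<^esub> z)" for x y z
    by (simp add: add.assoc)
qed

lemma quasicyclic_group_int_pow:
  assumes p: "p > 0" and x: "x \<in> carrier (quasicyclic_group p)"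
  shows "x [^]\<^bsub>quasicyclic_group p\<^esub> (k::int) = frac (of_int k * x)"
proof -
  interpret group "quasicyclic_group p"
    using group_quasicyclic_group[OF p] .
  have nat_pow: "x [^]\<^bsub>quasicyclic_group p\<^esub> (m::nat) = frac (of_nat m * x)" for m
    by (induction m) (simp_all add: algebra_simps)
  have inv: "inv\<^bsub>quasicyclic_group p\<^esub> y = frac (- y)" if "y \<in> carrier (quasicyclic_group p)" for y
  proof (rule inv_equality)
    show "frac (- y) \<in> carrier (quasicyclic_group p)"
      using that frac_in_quasicyclic_group[OF p] p_power_fractions_uminus
      by (simp add: carrier_quasicyclic_group)
  qed (simp_all add: that)
  show ?thesis
  proof (cases k rule: int_cases2)
    case (nonneg m)
    then show ?thesis
      using nat_pow by (simp add: int_pow_int)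
  next
    case (nonpos m)
    have "frac (of_nat m * x) \<in> carrier (quasicyclic_group p)"
      using nat_pow x by (metis nat_pow_closed)
    then have "x [^]\<^bsub>quasicyclic_group p\<^esub> k = frac (- frac (of_nat m * x))"
      using nonpos nat_pow inv int_pow_neg[OF x] by (simp add: int_pow_int)
    then show ?thesis
      using nonpos by (simp add: frac_neg_frac)
  qed
qed

lemma of_int_divide_in_Ints_iff:
  assumes "q \<noteq> 0"
  shows "(of_int k / of_int q :: 'a::field_char_0) \<in> \<int> \<longleftrightarrow> q dvd k"
proof
  assume "of_int k / of_int q \<in> (\<int> :: 'a set)"
  then obtain j where "of_int k / of_int q = (of_int j :: 'a)"
    by (auto elim: Ints_cases)
  then have "(of_int k :: 'a) = of_int (q * j)"
    using assms by (simp add: field_simps)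
  then show "q dvd k"
    by (simp only: of_int_eq_iff) simp
next
  assume "q dvd k"
  then show "of_int k / of_int q \<in> (\<int> :: 'a set)"
    using assms by auto
qed

lemma quasicyclic_group_generator_of_order:
  assumes p: "p > 1" and N: "N > 0"
  shows "1 / of_nat (p ^ N) \<in> carrier (quasicyclic_group p)"
    and "group.ord (quasicyclic_group p) (1 / of_nat (p ^ N)) = p ^ N"
proof -
  have "1 / of_nat (p ^ N) \<in> p_power_fractions p"
    unfolding p_power_fractions_def by (rule CollectI, rule exI[of _ 1], rule exI[of _ N]) simp
  moreover have "(1 / of_nat (p ^ N) :: rat) < 1"
    using p N by simp
  ultimately show e: "1 / of_nat (p ^ N) \<in> carrier (quasicyclic_group p)"
    using p by (simp add: carrier_quasicyclic_group)
  have "frac (of_int k / of_int (int p ^ N) :: rat) = 0 \<longleftrightarrow> int p ^ N dvd k" for k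
    using of_int_divide_in_Ints_iff[of "int p ^ N" k, where 'a=rat] p by (simp add: frac_eq_0_iff)
  then show "group.ord (quasicyclic_group p) (1 / of_nat (p ^ N)) = p ^ N"
    using p e by (intro group.ord_eqI group_quasicyclic_group) (simp_all add: quasicyclic_group_int_pow)
qed

lemma quasicyclic_group_divisible:
  assumes p: "p > 1" and x: "x \<in> carrier (quasicyclic_group p)"
  shows "\<exists>w\<in>carrier (quasicyclic_group p). w [^]\<^bsub>quasicyclic_group p\<^esub> int p = x"
proof
  obtain a k where xk: "0 \<le> x" "x < 1" "x = of_int a / of_nat (p ^ k)"
    using x by (auto simp: carrier_quasicyclic_group p_power_fractions_def)
  have "x / of_nat p = of_int a / of_nat (p ^ Suc k)"
    using xk(3) by simp
  then have "x / of_nat p \<in> p_power_fractions p"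
    unfolding p_power_fractions_def by blast
  moreover have "0 \<le> x / of_nat p" "x / of_nat p < 1"
    using xk(1,2) p by (simp_all add: divide_less_eq)
  ultimately show w: "x / of_nat p \<in> carrier (quasicyclic_group p)"
    by (simp add: carrier_quasicyclic_group)
  show "(x / of_nat p) [^]\<^bsub>quasicyclic_group p\<^esub> int p = x"
    using quasicyclic_group_int_pow[OF _ w] p xk(1,2) by (simp add: frac_eq)
qed

lemma quasicyclic_group_socle:
  assumes p: "p > 1" and N: "N > 0" and c: "c \<in> carrier (quasicyclic_group p)"
    and c_p: "c [^]\<^bsub>quasicyclic_group p\<^esub> int p = \<one>\<^bsub>quasicyclic_group p\<^esub>"
  shows "\<exists>j::int. c = (1 / of_nat (p ^ N)) [^]\<^bsub>quasicyclic_group p\<^esub> (int p ^ (N - 1) * j)"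
proof -
  have c01: "0 \<le> c" "c < 1"
    using c by (auto simp: carrier_quasicyclic_group)
  have "frac (of_nat p * c) = 0"
    using c_p quasicyclic_group_int_pow[OF _ c] p by simp
  then obtain j where j: "of_nat p * c = of_int j"
    by (auto simp: frac_eq_0_iff elim: Ints_cases)
  have "of_int (int p ^ (N - 1) * j) * (1 / of_nat (p ^ N)) = (of_int j / of_nat p :: rat)"
  proof -
    have "(of_nat (p ^ N) :: rat) = of_nat p ^ (N - 1) * of_nat p"
      using N by (simp flip: power_Suc2)
    then show ?thesis
      using p by (simp add: field_simps)
  qed
  also have "\<dots> = c"
    using j p by (simp add: field_simps)
  finally have "c = (1 / of_nat (p ^ N)) [^]\<^bsub>quasicyclic_group p\<^esub> (int p ^ (N - 1) * j)"
    using quasicyclic_group_int_pow[OF _ quasicyclic_group_generator_of_order(1)[OF p N]] p c01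
    by (simp add: frac_eq)
  then show ?thesis ..
qed

section \<open>The two cases\<close>

lemma (in group) mon_avoiding_kernel:
  assumes A: "subgroup A G" and \<xi>: "\<xi> \<in> mon (G\<lparr>carrier := A\<rparr>) (G\<lparr>carrier := A\<rparr>)"
    and avoid: "\<And>k::int. e [^] k \<in> \<xi> ` A \<Longrightarrow> e [^] k = \<one>"
    and x: "x \<in> A" "\<xi> x = e [^] (k::int)"
  shows "e [^] k = \<one>" "x = \<one>"
proof -
  show e: "e [^] k = \<one>"
    using avoid x by (metis image_eqI)
  have hom: "\<xi> \<in> hom (G\<lparr>carrier := A\<rparr>) (G\<lparr>carrier := A\<rparr>)" and inj: "inj_on \<xi> A"
    using \<xi> unfolding mon_def by auto
  have "\<xi> \<one> = \<one>"
    using hom_one[OF hom subgroup_imp_group[OF A] subgroup_imp_group[OF A]] by simp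
  then have "\<xi> x = \<xi> \<one>"
    using e x(2) by simp
  then show "x = \<one>"
    using inj_onD[OF inj] x(1) subgroup.one_closed[OF A] by blast
qed

context comm_group
begin

lemma inessential_cyclic_in_summand:
  assumes DW: "internal_direct_sum G D W (carrier G)" and YZ: "internal_direct_sum G Y Z D"
    and p: "Factorial_Ring.prime p" and n: "0 < n"
    and y0: "y0 \<in> Y" "ord y0 = p ^ n" and Y_exponent: "\<And>y. y \<in> Y \<Longrightarrow> y [^] (int p ^ n) = \<one>"
    and z0: "z0 \<in> Z" "p ^ (n + 2) dvd ord z0"
  shows "inessential_cyclic G Y (Z <#> W) p n y0 z0"
proof
  show "internal_direct_sum G Y (Z <#> W) (carrier G)"
    using internal_direct_sum_assoc(1)[OF DW YZ] .
  show "z0 \<in> Z <#> W"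
    using internal_direct_sum_left_subset[OF internal_direct_sum_assoc(2)[OF DW YZ]] z0(1) by blast
qed (use assms in auto)

lemma not_semi_generalized_bassian_shiftable:
  assumes DW: "internal_direct_sum G D W (carrier G)" and YZ: "internal_direct_sum G Y Z D"
    and p: "Factorial_Ring.prime p" and n: "0 < n"
    and y0_Y: "y0 \<in> Y" "ord y0 = p ^ n" and Y_exponent: "\<And>y. y \<in> Y \<Longrightarrow> y [^] (int p ^ n) = \<one>"
    and z0_Z: "z0 \<in> Z" "p ^ (n + 2) dvd ord z0"
    and \<xi>: "\<xi> \<in> mon (G\<lparr>carrier := Z\<rparr>) (G\<lparr>carrier := Z\<rparr>)"
    and avoid: "\<And>k::int. z0 [^] k \<in> \<xi> ` Z \<Longrightarrow> z0 [^] k = \<one>"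
  shows "\<not> semi_generalized_bassian G"
proof -
  interpret inessential_cyclic G Y "Z <#> W" p n y0 z0
    using inessential_cyclic_in_summand[OF DW YZ p n y0_Y Y_exponent z0_Z] .
  have sub: "subgroup Y G" "subgroup Z G"
    using internal_direct_sumD[OF YZ] by blast+
  obtain \<gamma> where \<gamma>: "hom_modulo G H (Z <#> W) \<gamma>"
    and \<gamma>_Z: "\<And>c z. c \<in> Z <#> W \<Longrightarrow> z \<in> Z \<Longrightarrow> \<gamma> c = z \<Longrightarrow> c \<in> Z \<and> \<xi> c = z"
    using hom_modulo_extend_by_identity[OF internal_direct_sum_assoc(2)[OF DW YZ] H_subgroup
        hom_modulo_hom[OF H_subgroup _ subgroup.subset[OF sub(2)]]] \<xi>
    unfolding mon_def by blast
  have "y = \<one> \<and> c = \<one>"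
    if "y \<in> Y" "c \<in> Z <#> W" "y = y0 [^] k" "\<gamma> c = z0 [^] (int p * k)" for y c k
  proof -
    have "c \<in> Z" "\<xi> c = z0 [^] (int p * k)"
      using \<gamma>_Z[OF that(2) _ that(4)] subgroup_int_pow_closed[OF sub(2) z0_Z(1)] by blast+
    then have "z0 [^] (int p * k) = \<one>" "c = \<one>"
      using mon_avoiding_kernel[OF sub(2) \<xi> avoid] by blast+
    moreover have "z0 [^] (int p ^ 2 * k) = (z0 [^] (int p * k)) [^] int p"
      using z0_carrier by (simp add: int_pow_pow power2_eq_square mult_ac)
    ultimately have "int p ^ n dvd k" "c = \<one>"
      using z0_pow_eq_one_imp by simp_all
    then show ?thesis
      using that(3) y0_pow_eq_one_iff by simp
  qed
  then show ?thesis
    using not_semi_generalized_bassian[OF hom_modulo_id[OF H_subgroup subgroup.subset[OF sub(1)]] \<gamma>]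
    by blast
qed

lemma not_semi_generalized_bassian_divisible:
  assumes DW: "internal_direct_sum G D W (carrier G)" and YZ: "internal_direct_sum G Y Z D"
    and p: "Factorial_Ring.prime p" and n: "0 < n"
    and y0_Y: "y0 \<in> Y" "ord y0 = p ^ n" and Y_exponent: "\<And>y. y \<in> Y \<Longrightarrow> y [^] (int p ^ n) = \<one>"
    and \<xi>: "\<xi> \<in> mon (G\<lparr>carrier := Y\<rparr>) (G\<lparr>carrier := Y\<rparr>)"
    and avoid: "\<And>k::int. y0 [^] k \<in> \<xi> ` Y \<Longrightarrow> y0 [^] k = \<one>"
    and z0_Z: "z0 \<in> Z" "ord z0 = p ^ (n + 2)"
    and divisible: "\<And>z. z \<in> Z \<Longrightarrow> \<exists>w\<in>Z. w [^] int p = z"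
    and socle: "\<And>c. c \<in> Z \<Longrightarrow> c [^] int p = \<one> \<Longrightarrow> \<exists>j::int. c = z0 [^] (int p ^ (n + 1) * j)"
  shows "\<not> semi_generalized_bassian G"
proof -
  interpret inessential_cyclic G Y "Z <#> W" p n y0 z0
    using inessential_cyclic_in_summand[OF DW YZ p n y0_Y Y_exponent z0_Z(1)] z0_Z(2) by simp
  have sub: "subgroup Y G" "subgroup Z G"
    using internal_direct_sumD[OF YZ] by blast+
  obtain r where r: "hom_modulo G H Z r" "\<And>z. z \<in> Z \<Longrightarrow> r z [^] int p = z"
    using p_root_hom_moduloE[OF sub(2) divisible socle] by blast
  obtain \<gamma> where \<gamma>: "hom_modulo G H (Z <#> W) \<gamma>"
    and \<gamma>_Z: "\<And>c z. c \<in> Z <#> W \<Longrightarrow> z \<in> Z \<Longrightarrow> \<gamma> c = z \<Longrightarrow> c \<in> Z \<and> r c = z"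
    using hom_modulo_extend_by_identity[OF internal_direct_sum_assoc(2)[OF DW YZ] H_subgroup r(1)] by blast
  have "y = \<one> \<and> c = \<one>"
    if "y \<in> Y" "c \<in> Z <#> W" "\<xi> y = y0 [^] k" "\<gamma> c = z0 [^] (int p * k)" for y c k
  proof -
    have "y0 [^] k = \<one>" "y = \<one>"
      using mon_avoiding_kernel[OF sub(1) \<xi> avoid that(1,3)] by blast+
    then obtain j where j: "k = int p ^ n * j"
      using y0_pow_eq_one_iff by blast
    have "c \<in> Z" "r c = z0 [^] (int p * k)"
      using \<gamma>_Z[OF that(2) _ that(4)] subgroup_int_pow_closed[OF sub(2) z0_Z(1)] by blast+
    then have "c = (z0 [^] (int p * k)) [^] int p"
      using r(2) by metis
    also have "\<dots> = z0 [^] (int p ^ (n + 2) * j)"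
      using z0_carrier j by (simp add: int_pow_pow power_add power2_eq_square mult_ac)
    also have "\<dots> = \<one>"
      using int_pow_eq_id[OF z0_carrier] z0_Z(2) by simp
    finally show ?thesis
      using \<open>y = \<one>\<close> by simp
  qed
  moreover have "hom_modulo G H Y \<xi>"
    using hom_modulo_hom[OF H_subgroup _ subgroup.subset[OF sub(1)]] \<xi> unfolding mon_def by blast
  ultimately show ?thesis
    using not_semi_generalized_bassian[OF _ \<gamma>] by blast
qed

end

context group
begin

lemma iso_integer_mod_group_generator:
  assumes Y: "subgroup Y G" "G\<lparr>carrier := Y\<rparr> \<cong> integer_mod_group (p ^ n)" and p: "1 < p" and n: "0 < n"
  obtains y0 where "y0 \<in> Y" "ord y0 = p ^ n" "\<And>y. y \<in> Y \<Longrightarrow> y [^] (int p ^ n) = \<one>"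
proof -
  obtain \<psi> where \<psi>: "subgroup_iso G (integer_mod_group (p ^ n)) Y \<psi>"
    using subgroup_isoE[OF Y group_integer_mod_group] .
  have one: "1 \<in> carrier (integer_mod_group (p ^ n))"
    using p n by simp
  show thesis
  proof
    show "\<psi> 1 \<in> Y" "ord (\<psi> 1) = p ^ n"
      using subgroup_iso.\<psi>_mem[OF \<psi> one] subgroup_iso.ord_\<psi>[OF \<psi> one]
        ord_one_integer_mod_group[OF one_less_power[OF p n]] by simp_all
    show "y [^] (int p ^ n) = \<one>" if "y \<in> Y" for y
      using subgroup_iso.exponent_transfer[OF \<psi> integer_mod_group_exponent that] by simp
  qed
qed

lemma iso_sum_copies_avoiding_mon:
  assumes Z: "subgroup Z G" "G\<lparr>carrier := Z\<rparr> \<cong> sum_group I (\<lambda>_. K)"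
    and K: "group K" and I: "infinite I" and a: "a \<in> carrier K"
  obtains z0 \<xi> where "z0 \<in> Z" "ord z0 = group.ord K a" "\<xi> \<in> mon (G\<lparr>carrier := Z\<rparr>) (G\<lparr>carrier := Z\<rparr>)"
    "\<And>k::int. z0 [^] k \<in> \<xi> ` Z \<Longrightarrow> z0 [^] k = \<one>"
proof -
  obtain e \<zeta> where e: "e \<in> carrier (sum_group I (\<lambda>_. K))"
      "group.ord (sum_group I (\<lambda>_. K)) e = group.ord K a"
    and \<zeta>: "\<zeta> \<in> mon (sum_group I (\<lambda>_. K)) (sum_group I (\<lambda>_. K))"
    and avoid: "\<And>k::int. e [^]\<^bsub>sum_group I (\<lambda>_. K)\<^esub> k \<in> \<zeta> ` carrier (sum_group I (\<lambda>_. K))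
      \<Longrightarrow> e [^]\<^bsub>sum_group I (\<lambda>_. K)\<^esub> k = \<one>\<^bsub>sum_group I (\<lambda>_. K)\<^esub>"
    using sum_copies_avoiding_mon[OF K I a] by blast
  obtain \<phi> where \<phi>: "subgroup_iso G (sum_group I (\<lambda>_. K)) Z \<phi>"
    using subgroup_isoE[OF Z sum_copies_group[OF K]] .
  have "\<phi> e \<in> Z" "ord (\<phi> e) = group.ord K a"
    using subgroup_iso.\<psi>_mem[OF \<phi> e(1)] subgroup_iso.ord_\<psi>[OF \<phi> e(1)] e(2) by simp_all
  then show thesis
    using that subgroup_iso.avoiding_mon_transfer[OF \<phi> e(1) \<zeta> avoid] by blast
qed

lemma iso_quasicyclic_generator:
  assumes Z: "subgroup Z G" "G\<lparr>carrier := Z\<rparr> \<cong> quasicyclic_group p" and p: "1 < p" and N: "0 < N"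
  obtains z0 where "z0 \<in> Z" "ord z0 = p ^ N" "\<And>z. z \<in> Z \<Longrightarrow> \<exists>w\<in>Z. w [^] int p = z"
    "\<And>c. c \<in> Z \<Longrightarrow> c [^] int p = \<one> \<Longrightarrow> \<exists>j::int. c = z0 [^] (int p ^ (N - 1) * j)"
proof -
  obtain \<phi> where \<phi>: "subgroup_iso G (quasicyclic_group p) Z \<phi>"
    using subgroup_isoE[OF Z group_quasicyclic_group] p by auto
  note e = quasicyclic_group_generator_of_order[OF p N]
  show thesis
  proof
    show "\<phi> (1 / of_nat (p ^ N)) \<in> Z" "ord (\<phi> (1 / of_nat (p ^ N))) = p ^ N"
      using subgroup_iso.\<psi>_mem[OF \<phi> e(1)] subgroup_iso.ord_\<psi>[OF \<phi> e(1)] e(2) by simp_all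
    show "\<exists>w\<in>Z. w [^] int p = z" if "z \<in> Z" for z
      using subgroup_iso.divisible_transfer[OF \<phi> quasicyclic_group_divisible[OF p] that] .
    show "\<exists>j::int. c = \<phi> (1 / of_nat (p ^ N)) [^] (int p ^ (N - 1) * j)"
      if "c \<in> Z" "c [^] int p = \<one>" for c
      using subgroup_iso.socle_transfer[OF \<phi> e(1) quasicyclic_group_socle[OF p N] that] .
  qed
qed

end

lemma (in comm_group) not_semi_generalized_bassian_cyclic_summand:
  assumes DW: "internal_direct_sum G D W (carrier G)" and YZ: "internal_direct_sum G Y Z D"
    and p: "Factorial_Ring.prime p" and n: "0 < n"
    and Y_iso: "G\<lparr>carrier := Y\<rparr> \<cong> integer_mod_group (p ^ n)"
    and Z_iso: "G\<lparr>carrier := Z\<rparr> \<cong> sum_group I (\<lambda>_. K)" and K: "group K" and I: "infinite I"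
    and a: "a \<in> carrier K" "p ^ (n + 2) dvd group.ord K a"
  shows "\<not> semi_generalized_bassian G"
proof -
  have sub: "subgroup Y G" "subgroup Z G"
    using internal_direct_sumD[OF YZ] by blast+
  obtain y0 where y0: "y0 \<in> Y" "ord y0 = p ^ n" "\<And>y. y \<in> Y \<Longrightarrow> y [^] (int p ^ n) = \<one>"
    using iso_integer_mod_group_generator[OF sub(1) Y_iso prime_gt_1_nat[OF p] n] by blast
  obtain z0 \<xi> where "z0 \<in> Z" "ord z0 = group.ord K a" "\<xi> \<in> mon (G\<lparr>carrier := Z\<rparr>) (G\<lparr>carrier := Z\<rparr>)"
    "\<And>k::int. z0 [^] k \<in> \<xi> ` Z \<Longrightarrow> z0 [^] k = \<one>"
    using iso_sum_copies_avoiding_mon[OF sub(2) Z_iso K I a(1)] by blast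
  then show ?thesis
    using not_semi_generalized_bassian_shiftable[OF DW YZ p n y0] a(2) by simp
qed

lemma (in comm_group) not_semi_generalized_bassian_quasicyclic_summand:
  assumes DW: "internal_direct_sum G D W (carrier G)" and YZ: "internal_direct_sum G Y Z D"
    and p: "Factorial_Ring.prime p" and n: "0 < n"
    and Y_iso: "G\<lparr>carrier := Y\<rparr> \<cong> sum_group I (\<lambda>_. integer_mod_group (p ^ n))" and I: "infinite I"
    and Z_iso: "G\<lparr>carrier := Z\<rparr> \<cong> quasicyclic_group p"
  shows "\<not> semi_generalized_bassian G"
proof -
  have sub: "subgroup Y G" "subgroup Z G"
    using internal_direct_sumD[OF YZ] by blast+
  have p1: "1 < p"
    using prime_gt_1_nat[OF p] .
  have one: "1 \<in> carrier (integer_mod_group (p ^ n))"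
    using p1 n by simp
  obtain y0 \<xi> where y0: "y0 \<in> Y" "ord y0 = p ^ n" and \<xi>: "\<xi> \<in> mon (G\<lparr>carrier := Y\<rparr>) (G\<lparr>carrier := Y\<rparr>)"
    "\<And>k::int. y0 [^] k \<in> \<xi> ` Y \<Longrightarrow> y0 [^] k = \<one>"
    using iso_sum_copies_avoiding_mon[OF sub(1) Y_iso group_integer_mod_group I one]
      ord_one_integer_mod_group[OF one_less_power[OF p1 n]] by metis
  obtain \<psi> where \<psi>: "subgroup_iso G (sum_group I (\<lambda>_. integer_mod_group (p ^ n))) Y \<psi>"
    using subgroup_isoE[OF sub(1) Y_iso sum_copies_group[OF group_integer_mod_group]] .
  have "y [^] (int p ^ n) = \<one>" if "y \<in> Y" for y
    using subgroup_iso.exponent_transfer[OF \<psi> sum_copies_exponent[OF group_integer_mod_group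
          integer_mod_group_exponent] that] by simp
  moreover obtain z0 where "z0 \<in> Z" "ord z0 = p ^ (n + 2)" "\<And>z. z \<in> Z \<Longrightarrow> \<exists>w\<in>Z. w [^] int p = z"
    "\<And>c. c \<in> Z \<Longrightarrow> c [^] int p = \<one> \<Longrightarrow> \<exists>j::int. c = z0 [^] (int p ^ (n + 1) * j)"
    using iso_quasicyclic_generator[OF sub(2) Z_iso p1, of "n + 2"] by auto
  ultimately show ?thesis
    using not_semi_generalized_bassian_divisible[OF DW YZ p n y0 _ \<xi>] by blast
qed

theorem lemma2p10:
  fixes G :: "('a, 'b) monoid_scheme" (structure) and p n :: nat and Xs Ys Zs :: "'a set" and I :: "'i set"
  assumes "comm_group G"
    and "Factorial_Ring.prime p"
    and "p_group p G"
    and "n > 0"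
    and "direct_summand G Xs"
    and "internal_direct_sum G Ys Zs Xs"
    and "infinite I"
    and "(G\<lparr>carrier := Ys\<rparr> \<cong> integer_mod_group (p ^ n) \<and>
           ((\<exists>m::nat. n + 2 \<le> m \<and>
               G\<lparr>carrier := Zs\<rparr> \<cong> sum_group I (\<lambda>_. integer_mod_group (p ^ m)))
            \<or> G\<lparr>carrier := Zs\<rparr> \<cong> sum_group I (\<lambda>_. quasicyclic_group p)))
       \<or> (G\<lparr>carrier := Ys\<rparr> \<cong> sum_group I (\<lambda>_. integer_mod_group (p ^ n)) \<and>
           G\<lparr>carrier := Zs\<rparr> \<cong> quasicyclic_group p)"
  shows "\<not> semi_generalized_bassian G"
proof -
  interpret comm_group G by fact
  obtain W where DW: "internal_direct_sum G Xs W (carrier G)"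
    using assms(5) unfolding direct_summand_def by blast
  have p: "1 < p"
    using prime_gt_1_nat[OF assms(2)] .
  note cyclic = not_semi_generalized_bassian_cyclic_summand[OF DW assms(6,2,4)]
  have "1 \<in> carrier (integer_mod_group (p ^ m))"
    "p ^ (n + 2) dvd group.ord (integer_mod_group (p ^ m)) 1" if "n + 2 \<le> m" for m
    using that p ord_one_integer_mod_group[OF one_less_power[OF p], of m] le_imp_power_dvd[of "n + 2" m p]
    by simp_all
  then have "\<not> semi_generalized_bassian G" if "G\<lparr>carrier := Ys\<rparr> \<cong> integer_mod_group (p ^ n)"
    "n + 2 \<le> m" "G\<lparr>carrier := Zs\<rparr> \<cong> sum_group I (\<lambda>_. integer_mod_group (p ^ m))" for m
    using cyclic[OF that(1,3) group_integer_mod_group assms(7)] that(2) by blast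
  moreover have "\<not> semi_generalized_bassian G" if "G\<lparr>carrier := Ys\<rparr> \<cong> integer_mod_group (p ^ n)"
    "G\<lparr>carrier := Zs\<rparr> \<cong> sum_group I (\<lambda>_. quasicyclic_group p)"
    using cyclic[OF that group_quasicyclic_group assms(7)]
      quasicyclic_group_generator_of_order[OF p, of "n + 2"] p by simp
  moreover have "\<not> semi_generalized_bassian G"
    if "G\<lparr>carrier := Ys\<rparr> \<cong> sum_group I (\<lambda>_. integer_mod_group (p ^ n))"
      "G\<lparr>carrier := Zs\<rparr> \<cong> quasicyclic_group p"
    using not_semi_generalized_bassian_quasicyclic_summand[OF DW assms(6,2,4) that(1) assms(7) that(2)] .
  ultimately show ?thesis
    using assms(8) by blast
qed

end
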